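(* Let $p\ge 3$ be an odd integer, $\mu>0$ and $\alpha>0$. Let $(x_0,y_0)\in\mathbb{R}^2$ and let $(x,y)\in C^1([0,\infty);\mathbb{R}^2)$ be the global solution of \[ x'(t)=y(t),\qquad y'(t)=-\alpha x(t)^p-\mu y(t),\quad t>0,\qquad x(0)=x_0,\ y(0)=y_0. \] Define \[ \mathcal{E}(t):=\frac12 y(t)^2+\frac{\mu}{2}x(t)y(t)+\frac{\mu^2}{4}x(t)^2+\frac{\alpha}{p+1}x(t)^{p+1}. \] Then there exists a constant $\nu>0$ such that \[ \mathcal{E}'(t)+\nu\,\frac{\mathcal{E}(t)^{\frac{p+1}{2}}}{1+\mathcal{E}(t)^{\frac{p-1}{2}}}\le 0\quad\text{for all } t\ge 0. \]
   Context: The function $\mathcal{E}(t)$ is nonnegative for all $t$ (since $p+1$ is even and $\mathcal{E}(t)=\frac14(y+\mu x)^2+\frac14 y^2+\frac{\alpha}{p+1}x^{p+1}$), so its real powers are well defined. *)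

theory Defs
  imports "HOL-Analysis.Analysis"
begin

definition energy :: "nat \<Rightarrow> real \<Rightarrow> real \<Rightarrow> (real \<Rightarrow> real) \<Rightarrow> (real \<Rightarrow> real) \<Rightarrow> real \<Rightarrow> real" where
  "energy p \<mu> \<alpha> x y t =
     (1/2) * (y t)^2 + (\<mu>/2) * x t * y t + (\<mu>^2/4) * (x t)^2 + \<alpha> / real (p+1) * (x t)^(p+1)"

end

theory Submission
  imports Defs
begin

text \<open>Along solutions the modified energy decays like
  \<open>E' = -(\<mu>/2) f\<close> with the dissipation \<open>f = y\<^sup>2 + \<alpha> x\<^sup>p\<^sup>+\<^sup>1\<close>. Writing \<open>p + 1 = 2q\<close>,
  the energy is bounded by \<open>f\<close> where \<open>f \<ge> 1\<close> and by \<open>root q f\<close> where \<open>f \<le> 1\<close>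
  (only the term \<open>x\<^sup>2\<close> is not controlled linearly by \<open>f\<close>). Hence
  \<open>E\<^sup>q / (1 + E\<^sup>q\<^sup>-\<^sup>1) \<le> min E (E\<^sup>q)\<close> is bounded by a constant times \<open>f\<close>,
  i.e. by a constant times \<open>-E'\<close>.\<close>

lemma at_within_Ici_nontrivial:
  fixes t :: real
  assumes "a \<le> t"
  shows "at t within {a..} \<noteq> bot"
proof -
  have "at t within {t..} \<le> at t within {a..}"
    using assms by (intro at_le) auto
  then show ?thesis
    by (auto simp: at_within_Ici_at_right bot_unique)
qed

lemma energy_has_real_derivative:
  assumes "(x has_real_derivative y t) (at t within S)"
    and "(y has_real_derivative (- \<alpha> * (x t)^p - \<mu> * y t)) (at t within S)"
  shows "(energy p \<mu> \<alpha> x y has_real_derivative - (\<mu>/2) * ((y t)^2 + \<alpha> * (x t)^(p+1)))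
           (at t within S)"
proof -
  have energy_eq: "energy p \<mu> \<alpha> x y = (\<lambda>t. (1/2) * (y t)^2 + (\<mu>/2) * x t * y t
                       + (\<mu>^2/4) * (x t)^2 + \<alpha> / real (p+1) * (x t)^(p+1))"
    by (simp add: energy_def fun_eq_iff)
  have power_Suc_p: "(x t)^(p+1) = x t * (x t)^p"
    by simp
  show ?thesis
    unfolding energy_eq
    by (rule derivative_eq_intros assms refl)+
       (simp add: power_Suc_p field_simps power2_eq_square)
qed

lemma energy_nonneg:
  assumes "odd p" and "\<alpha> \<ge> 0"
  shows "energy p \<mu> \<alpha> x y t \<ge> 0"
proof -
  have "(1/2) * (y t)^2 + (\<mu>/2) * x t * y t + (\<mu>^2/4) * (x t)^2
        = (1/4) * (y t + \<mu> * x t)^2 + (1/4) * (y t)^2"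
    by (simp add: power2_eq_square algebra_simps)
  moreover have "0 \<le> (1/4) * (y t + \<mu> * x t)^2 + (1/4) * (y t)^2"
    by simp
  moreover have "0 \<le> \<alpha> / real (p+1) * (x t)^(p+1)"
    using assms by (intro mult_nonneg_nonneg zero_le_even_power) auto
  ultimately show ?thesis
    unfolding energy_def by linarith
qed

lemma energy_le:
  assumes "odd p" and "\<alpha> \<ge> 0"
  shows "energy p \<mu> \<alpha> x y t \<le> (1 + \<mu>^2) * ((x t)^2 + (y t)^2) + \<alpha> * (x t)^(p+1)"
proof -
  have "(y t + \<mu> * x t)^2 \<le> 2 * ((y t)^2 + \<mu>^2 * (x t)^2)"
    using zero_le_square[of "y t - \<mu> * x t"] by (simp add: power2_eq_square algebra_simps)
  then have "(1/2) * (y t)^2 + (\<mu>/2) * x t * y t + (\<mu>^2/4) * (x t)^2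
             \<le> (3/4) * (y t)^2 + (\<mu>^2/2) * (x t)^2"
    by (simp add: power2_eq_square algebra_simps)
  also have "\<dots> \<le> (1 + \<mu>^2) * ((x t)^2 + (y t)^2)"
  proof -
    have nonneg: "0 \<le> (x t)^2" "0 \<le> (y t)^2" "0 \<le> \<mu>^2 * (x t)^2" "0 \<le> \<mu>^2 * (y t)^2"
      by simp_all
    show ?thesis
      by (simp add: algebra_simps) (use nonneg in linarith)
  qed
  finally have quadratic: "(1/2) * (y t)^2 + (\<mu>/2) * x t * y t + (\<mu>^2/4) * (x t)^2
                           \<le> (1 + \<mu>^2) * ((x t)^2 + (y t)^2)" .
  have "\<alpha> / real (p+1) * (x t)^(p+1) \<le> \<alpha> * (x t)^(p+1)"
    using assms by (intro mult_right_mono zero_le_even_power) (auto simp: divide_le_eq algebra_simps)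
  with quadratic show ?thesis
    unfolding energy_def by linarith
qed

lemma sum_squares_le_dissipation:
  fixes X Y :: real
  assumes "\<alpha> > 0" and "q \<ge> 1"
  defines "f \<equiv> Y^2 + \<alpha> * X^(2*q)"
  shows "X^2 + Y^2 \<le> (1 + root q (1/\<alpha>)) * max f (root q f)"
proof -
  have f: "\<alpha> * X^(2*q) \<le> f" "Y^2 \<le> f"
    unfolding f_def using assms(1) by (auto simp: zero_le_even_power)
  have "X^2 = root q ((X^2)^q)"
    using assms(2) by (simp add: real_root_power_cancel)
  also have "\<dots> \<le> root q (1/\<alpha> * f)"
  proof (rule real_root_le_mono)
    have "(X^2)^q = X^(2*q)"
      by (simp add: power_mult)
    with f(1) assms(1) show "(X^2)^q \<le> 1/\<alpha> * f"
      by (simp add: pos_le_divide_eq mult.commute)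
  qed (use assms(2) in simp)
  also have "\<dots> = root q (1/\<alpha>) * root q f"
    by (rule real_root_mult)
  also have "\<dots> \<le> root q (1/\<alpha>) * max f (root q f)"
    using assms by (intro mult_left_mono) (auto simp: real_root_ge_zero)
  finally show ?thesis
    using f(2) by (simp add: algebra_simps le_max_iff_disj)
qed

lemma energy_le_dissipation:
  fixes x y :: "real \<Rightarrow> real" and t :: real
  assumes "p + 1 = 2 * q" and "\<alpha> > 0"
  defines "f \<equiv> (y t)^2 + \<alpha> * (x t)^(p+1)"
  shows "energy p \<mu> \<alpha> x y t \<le> ((1 + \<mu>^2) * (1 + root q (1/\<alpha>)) + 1) * max f (root q f)"
proof -
  have "odd p" and "q \<ge> 1"
    using assms(1) by presburger+
  have "energy p \<mu> \<alpha> x y t \<le> (1 + \<mu>^2) * ((x t)^2 + (y t)^2) + \<alpha> * (x t)^(p+1)"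
    using \<open>odd p\<close> assms(2) by (intro energy_le) auto
  also have "\<dots> \<le> (1 + \<mu>^2) * ((1 + root q (1/\<alpha>)) * max f (root q f)) + max f (root q f)"
  proof (intro add_mono mult_left_mono)
    show "(x t)^2 + (y t)^2 \<le> (1 + root q (1/\<alpha>)) * max f (root q f)"
      using sum_squares_le_dissipation[OF assms(2) \<open>q \<ge> 1\<close>] assms(1) by (simp add: f_def)
    show "\<alpha> * (x t)^(p+1) \<le> max f (root q f)"
      using \<open>odd p\<close> by (simp add: f_def le_max_iff_disj)
  qed simp
  finally show ?thesis
    by (simp add: algebra_simps)
qed

lemma power_div_one_plus_power_le:
  fixes E :: real
  assumes "E \<ge> 0" and "q \<ge> 1"
  shows "E^q / (1 + E^(q-1)) \<le> E" and "E^q / (1 + E^(q-1)) \<le> E^q"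
proof -
  have pos: "0 < 1 + E^(q-1)"
    using assms(1) by (simp add: add_pos_nonneg)
  have "E^q = E * E^(q-1)"
    using assms(2) by (simp add: power_eq_if)
  then show "E^q / (1 + E^(q-1)) \<le> E"
    using assms(1) pos by (simp add: pos_divide_le_eq algebra_simps)
  show "E^q / (1 + E^(q-1)) \<le> E^q"
    using assms(1) pos by (simp add: pos_divide_le_eq algebra_simps)
qed

lemma power_div_one_plus_power_le_linear:
  fixes E f c :: real
  assumes "E \<ge> 0" and "f \<ge> 0" and "c \<ge> 0" and "q \<ge> 1"
    and E_le: "E \<le> c * max f (root q f)"
  shows "E^q / (1 + E^(q-1)) \<le> (c + c^q) * f"
proof (cases "f \<ge> 1")
  case True
  then have "root q f \<le> root q f ^ q"
    using assms(4) by (intro self_le_power) auto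
  with True assms(2,4) have "E \<le> c * f"
    using E_le by simp
  also have "\<dots> \<le> (c + c^q) * f"
    using assms(2,3) by (intro mult_right_mono) auto
  finally show ?thesis
    using power_div_one_plus_power_le(1)[OF assms(1,4)] by linarith
next
  case False
  then have "root q f ^ q \<le> root q f ^ 1"
    using assms(2,4) by (intro power_decreasing) (auto simp: real_root_ge_zero)
  with assms(2,4) have "f \<le> root q f"
    by simp
  then have "E^q \<le> (c * root q f)^q"
    using E_le assms(1) by (intro power_mono) auto
  also have "\<dots> = c^q * f"
    using assms(2,4) by (simp add: power_mult_distrib)
  also have "\<dots> \<le> (c + c^q) * f"
    using assms(2,3) by (intro mult_right_mono) auto
  finally show ?thesis
    using power_div_one_plus_power_le(2)[OF assms(1,4)] by linarith
qed

lemma energy_power_quotient_le_dissipation: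
  assumes "p + 1 = 2 * q" and "\<alpha> > 0"
  shows "\<exists>C>0. \<forall>x y t. energy p \<mu> \<alpha> x y t ^ q / (1 + energy p \<mu> \<alpha> x y t ^ (q - 1))
                      \<le> C * ((y t)^2 + \<alpha> * (x t)^(p+1))"
proof -
  have "odd p" and "q \<ge> 1"
    using assms(1) by presburger+
  define c where "c = (1 + \<mu>^2) * (1 + root q (1/\<alpha>)) + 1"
  have "c > 0"
    using assms(2) by (simp add: c_def add_pos_nonneg real_root_ge_zero)
  have "energy p \<mu> \<alpha> x y t ^ q / (1 + energy p \<mu> \<alpha> x y t ^ (q - 1))
        \<le> (c + c^q) * ((y t)^2 + \<alpha> * (x t)^(p+1))" for x y t
  proof (rule power_div_one_plus_power_le_linear)
    show "energy p \<mu> \<alpha> x y t \<le> c * max ((y t)^2 + \<alpha> * (x t)^(p+1))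
                                     (root q ((y t)^2 + \<alpha> * (x t)^(p+1)))"
      using energy_le_dissipation[OF assms] by (simp add: c_def)
    have "0 \<le> (x t)^(p+1)"
      using \<open>odd p\<close> by (intro zero_le_even_power) auto
    then show "0 \<le> (y t)^2 + \<alpha> * (x t)^(p+1)"
      using assms(2) by (intro add_nonneg_nonneg mult_nonneg_nonneg) simp_all
  qed (use \<open>odd p\<close> assms(2) \<open>c > 0\<close> \<open>q \<ge> 1\<close> energy_nonneg in auto)
  moreover have "c + c^q > 0"
    using \<open>c > 0\<close> by (simp add: add_pos_pos)
  ultimately show ?thesis
    by blast
qed

text \<open>The hypothesis \<open>q \<ge> 2\<close> matters at \<open>E = 0\<close>, where \<open>0 powr 0 = 0\<close> but \<open>0 ^ 0 = 1\<close>.\<close>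

lemma powr_quotient_eq_power_quotient:
  fixes E :: real
  assumes "E \<ge> 0" and "p + 1 = 2 * q" and "q \<ge> 2"
  shows "E powr ((real p + 1) / 2) / (1 + E powr ((real p - 1) / 2)) = E^q / (1 + E^(q-1))"
proof -
  have exponents: "(real p + 1) / 2 = real q" "(real p - 1) / 2 = real (q - 1)"
    using assms(2,3) by (simp_all add: of_nat_diff field_simps flip: of_nat_Suc)
  have "E powr real q = E^q" "E powr real (q - 1) = E^(q-1)"
    using assms(1) by (rule powr_realpow', use assms(3) in simp)+
  then show ?thesis
    unfolding exponents by simp
qed

theorem proposition1:
  fixes p :: nat and \<mu> \<alpha> x0 y0 :: real and x y :: "real \<Rightarrow> real"
  assumes "p \<ge> 3" and "odd p" and "\<mu> > 0" and "\<alpha> > 0"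
    and "\<And>t. t \<ge> 0 \<Longrightarrow> (x has_real_derivative y t) (at t within {0..})"
    and "\<And>t. t \<ge> 0 \<Longrightarrow>
           (y has_real_derivative (- \<alpha> * (x t)^p - \<mu> * y t)) (at t within {0..})"
    and "x 0 = x0" and "y 0 = y0"
  shows "\<exists>\<nu>>0. \<forall>t\<ge>0. \<forall>D.
           ((energy p \<mu> \<alpha> x y) has_real_derivative D) (at t within {0..}) \<longrightarrow>
           D + \<nu> * (energy p \<mu> \<alpha> x y t powr ((real p + 1) / 2)
                  / (1 + energy p \<mu> \<alpha> x y t powr ((real p - 1) / 2))) \<le> 0"
proof -
  define q where "q = (p + 1) div 2"
  have pq: "p + 1 = 2 * q" and "q \<ge> 2"
    using assms(1,2) unfolding q_def by presburger+
  obtain C where "C > 0" and quotient_le: "\<And>t. energy p \<mu> \<alpha> x y t ^ q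
      / (1 + energy p \<mu> \<alpha> x y t ^ (q - 1)) \<le> C * ((y t)^2 + \<alpha> * (x t)^(p+1))"
    using energy_power_quotient_le_dissipation[OF pq assms(4)] by blast
  define \<nu> where "\<nu> = \<mu> / (2 * C)"
  have "\<nu> > 0"
    using \<open>C > 0\<close> assms(3) by (simp add: \<nu>_def)
  moreover have "D + \<nu> * (E powr ((real p + 1) / 2) / (1 + E powr ((real p - 1) / 2))) \<le> 0"
    if t: "t \<ge> 0" and D: "(energy p \<mu> \<alpha> x y has_real_derivative D) (at t within {0..})"
      and E_def: "E = energy p \<mu> \<alpha> x y t" for t D E
  proof -
    have "D = - (\<mu>/2) * ((y t)^2 + \<alpha> * (x t)^(p+1))"
      using has_field_derivative_unique[OF D energy_has_real_derivative[OF assms(5,6)[OF t]]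
          at_within_Ici_nontrivial[OF t]] .
    moreover have "\<nu> * (E^q / (1 + E^(q-1))) \<le> \<nu> * (C * ((y t)^2 + \<alpha> * (x t)^(p+1)))"
      unfolding E_def using quotient_le[of t] \<open>\<nu> > 0\<close> by (intro mult_left_mono) auto
    moreover have "E \<ge> 0"
      using assms(2,4) by (simp add: E_def energy_nonneg)
    ultimately show ?thesis
      using \<open>C > 0\<close> \<open>q \<ge> 2\<close> pq by (simp add: powr_quotient_eq_power_quotient \<nu>_def)
  qed
  ultimately show ?thesis
    by blast
qed

end
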